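(* Let $q\equiv0\pmod3$ and $\mu\in\mathbb F_q^*\setminus\{1\}$. Then $\widetilde N_1(\mu)=\#\left\{c\in\mathbb F_q^*:\ \mu c^4+c^2+1\ne0,\ \eta\!\left(\dfrac{c^4}{\mu c^4+c^2+1}\right)=-1\right\}.$
   Context: $\eta$ is the quadratic character of $\mathbb F_q$: $\eta(a)=1$ if $a$ is a nonzero square, $\eta(a)=-1$ if $a$ is a non-square, $\eta(0)=0$. $\widetilde N_1(\mu)$ is the number of $c\in\mathbb F_q^*$ such that $t^3+ct^2-t-\mu c=0$ has exactly one solution $t\in\mathbb F_q$. *)

theory Defs
  imports Main
begin

definition eta :: "'a::{field,finite} \<Rightarrow> int" where
  "eta a = (if a = 0 then 0 else if (\<exists>b. b ^ 2 = a) then 1 else -1)"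

definition N1t :: "'a::{field,finite} \<Rightarrow> nat" where
  "N1t mu = card {c::'a. c \<noteq> 0 \<and>
      card {t::'a. t ^ 3 + c * t ^ 2 - t - mu * c = 0} = 1}"

end

(* In characteristic 3 the substitution t = u - 1/c turns t^3 + c t^2 - t - mu c into
   u^3 + c u^2 - D/c^3 with D = mu c^4 + c^2 + 1.  If D = 0 this has the two roots 0 and -c.
   Otherwise u = 1/s turns the roots into the solutions of a s^3 + c s = -1 with a = -D/c^3.
   Since cubing is additive, so is s \<mapsto> a s^3 + c s; it is injective, hence bijective,
   unless a \<beta>^2 + c = 0 for some \<beta> \<noteq> 0, and then all its fibres are invariant under
   s \<mapsto> s + \<beta>, so none is a singleton.  Finally -c/a = c^4/D. *)

theory Submission
  imports Defs "HOL-Algebra.Sylow" "HOL-Algebra.Multiplicative_Group"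
begin

lemma prime_dvd_card_imp_of_nat_eq_0:
  assumes "prime p" and "p dvd card (UNIV :: 'a::{idom,finite} set)"
  shows "of_nat p = (0::'a)"
proof -
  define G where "G = \<lparr>carrier = (UNIV :: 'a set), monoid.mult = (+), one = (0::'a)\<rparr>"
  interpret group G
  proof (rule groupI)
    fix x assume "x \<in> carrier G"
    show "\<exists>y\<in>carrier G. y \<otimes>\<^bsub>G\<^esub> x = \<one>\<^bsub>G\<^esub>"
      by (intro bexI[of _ "-x"]) (auto simp: G_def)
  qed (auto simp: G_def add_ac)
  have pow_G: "x [^]\<^bsub>G\<^esub> n = of_nat n * x" for x n
    by (induction n) (simp_all add: G_def algebra_simps)
  obtain m where "order G = p ^ 1 * m"
    using assms(2) by (auto simp: Coset.order_def G_def)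
  then obtain H where H: "subgroup H G" "card H = p"
    using sylow_thm[OF assms(1) is_group, of 1 m] by (auto simp: G_def)
  \<comment> \<open>Cauchy's theorem for the additive group, via a Sylow subgroup of order \<open>p\<close>\<close>
  have "\<not> H \<subseteq> {0}"
    using H(2) assms(1) card_mono[of "{0::'a}" H] prime_gt_1_nat[of p] by auto
  then obtain g where g: "g \<in> H" "g \<noteq> 0"
    by blast
  interpret H: group "G\<lparr>carrier := H\<rparr>"
    using subgroup.subgroup_is_group[OF H(1) is_group] .
  have "g [^]\<^bsub>G\<lparr>carrier := H\<rparr>\<^esub> order (G\<lparr>carrier := H\<rparr>) = 0"
    using H.pow_order_eq_1[of g] g by (simp add: G_def)
  moreover have "order (G\<lparr>carrier := H\<rparr>) = p"
    using H(2) by (simp add: Coset.order_def)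
  moreover have "x [^]\<^bsub>G\<lparr>carrier := H\<rparr>\<^esub> n = x [^]\<^bsub>G\<^esub> n" for x and n :: nat
    by (simp add: nat_pow_def)
  ultimately have "of_nat p * g = 0"
    by (simp add: pow_G)
  with g show ?thesis
    by simp
qed

lemma cube_add_char3:
  fixes x y :: "'a::comm_ring_1"
  assumes "(3::'a) = 0"
  shows "(x + y) ^ 3 = x ^ 3 + y ^ 3"
proof -
  have "(x + y) ^ 3 = x ^ 3 + y ^ 3 + 3 * (x ^ 2 * y + x * y ^ 2)"
    by (simp add: algebra_simps power2_eq_square power3_eq_cube)
  with assms show ?thesis
    by simp
qed

lemma inj_additive_cubic_char3:
  fixes a b :: "'a::field"
  assumes "(3::'a) = 0" and "a \<noteq> 0" and "\<nexists>\<beta>. \<beta> ^ 2 = - b / a"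
  shows "inj (\<lambda>s. a * s ^ 3 + b * s)"
proof (rule injI)
  fix x y assume eq: "a * x ^ 3 + b * x = a * y ^ 3 + b * y"
  have "(x - y) ^ 3 = x ^ 3 - y ^ 3"
    using cube_add_char3[OF assms(1), of x "- y"] by simp
  then have "(x - y) * (a * (x - y) ^ 2 + b) = (a * x ^ 3 + b * x) - (a * y ^ 3 + b * y)"
    by (simp add: algebra_simps power2_eq_square power3_eq_cube)
  also have "\<dots> = 0"
    using eq by simp
  finally have "(x - y) * (a * (x - y) ^ 2 + b) = 0" .
  moreover have "a * (x - y) ^ 2 + b \<noteq> 0"
    using assms(2,3) by (metis add_eq_0_iff2 nonzero_mult_div_cancel_left minus_divide_left)
  ultimately show "x = y"
    by simp
qed

lemma card_additive_cubic_fibre_eq_1_iff_char3: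
  fixes a b k :: "'a::{field,finite}"
  assumes "(3::'a) = 0" and "a \<noteq> 0" and "b \<noteq> 0"
  shows "card {s. a * s ^ 3 + b * s = k} = 1 \<longleftrightarrow> (\<nexists>\<beta>. \<beta> ^ 2 = - b / a)"
proof
  assume card_1: "card {s. a * s ^ 3 + b * s = k} = 1"
  show "\<nexists>\<beta>. \<beta> ^ 2 = - b / a"
  proof
    assume "\<exists>\<beta>. \<beta> ^ 2 = - b / a"
    then obtain \<beta> where "\<beta> ^ 2 = - b / a" ..
    then have \<beta>: "a * \<beta> ^ 2 + b = 0"
      using assms(2) by (simp add: field_simps)
    then have "\<beta> \<noteq> 0"
      using assms(3) by auto
    obtain s0 where fibre: "{s. a * s ^ 3 + b * s = k} = {s0}"
      using card_1 by (metis One_nat_def card_1_singleton_iff)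
    have "a * (s0 + \<beta>) ^ 3 + b * (s0 + \<beta>) = a * s0 ^ 3 + b * s0 + \<beta> * (a * \<beta> ^ 2 + b)"
      unfolding cube_add_char3[OF assms(1)]
      by (simp add: algebra_simps power2_eq_square power3_eq_cube)
    also have "\<dots> = k"
      using fibre \<beta> by auto
    finally have "s0 + \<beta> \<in> {s. a * s ^ 3 + b * s = k}"
      by simp
    then have "s0 + \<beta> = s0"
      unfolding fibre by simp
    with \<open>\<beta> \<noteq> 0\<close> show False
      by simp
  qed
next
  assume "\<nexists>\<beta>. \<beta> ^ 2 = - b / a"
  then have inj: "inj (\<lambda>s. a * s ^ 3 + b * s)"
    using assms(1,2) by (rule inj_additive_cubic_char3[rotated 2])
  then have "surj (\<lambda>s. a * s ^ 3 + b * s)"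
    by (rule finite_UNIV_inj_surj[OF finite_UNIV])
  then have "card ((\<lambda>s. a * s ^ 3 + b * s) -` {k}) = card {k}"
    using inj by (intro card_vimage_inj) auto
  then show "card {s. a * s ^ 3 + b * s = k} = 1"
    by (simp add: vimage_def)
qed

lemma card_roots_reversed_cubic:
  fixes b d :: "'a::field"
  assumes "d \<noteq> 0"
  shows "card {u. u ^ 3 + b * u ^ 2 + d = 0} = card {s. d * s ^ 3 + b * s + 1 = 0}"
proof -
  let ?U = "{u. u ^ 3 + b * u ^ 2 + d = 0}"
  have "d * s ^ 3 + b * s + 1 = 0 \<longleftrightarrow> inverse s \<in> ?U" for s
  proof (cases "s = 0")
    case False
    have factor: "s ^ 3 * (inverse s ^ 3 + b * inverse s ^ 2 + d) = d * s ^ 3 + b * s + 1"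
      using False by (simp add: field_simps power2_eq_square power3_eq_cube)
    show ?thesis
      unfolding mem_Collect_eq factor[symmetric] using False by simp
  qed (use assms in simp)
  then have reversed: "{s. d * s ^ 3 + b * s + 1 = 0} = inverse -` ?U"
    by blast
  have "inj (inverse :: 'a \<Rightarrow> 'a)"
    by (rule injI) simp
  moreover have "surj (inverse :: 'a \<Rightarrow> 'a)"
    by (rule surjI[of _ inverse]) simp
  ultimately have "card (inverse -` ?U) = card ?U"
    by (intro card_vimage_inj) simp_all
  then show ?thesis
    unfolding reversed ..
qed

lemma shifted_cubic_char3:
  fixes c mu u :: "'a::field"
  assumes "(3::'a) = 0" and "c \<noteq> 0"
  shows "(u - 1 / c) ^ 3 + c * (u - 1 / c) ^ 2 - (u - 1 / c) - mu * c
    = u ^ 3 + c * u ^ 2 - (mu * c ^ 4 + c ^ 2 + 1) / c ^ 3"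
proof -
  have "(u - 1 / c) ^ 3 + c * (u - 1 / c) ^ 2 - (u - 1 / c) - mu * c
      = u ^ 3 + c * u ^ 2 - (mu * c ^ 4 + c ^ 2 + 1) / c ^ 3
        + 3 * (1 / c - u - u ^ 2 / c + u / c ^ 2)"
    using assms(2) by (simp add: field_simps power2_eq_square power3_eq_cube power4_eq_xxxx)
  then show ?thesis
    using assms(1) by simp
qed

lemma card_roots_eq_1_iff_nonsquare_char3:
  fixes c mu :: "'a::{field,finite}"
  assumes "(3::'a) = 0" and "c \<noteq> 0"
  shows "card {t. t ^ 3 + c * t ^ 2 - t - mu * c = 0} = 1 \<longleftrightarrow>
    mu * c ^ 4 + c ^ 2 + 1 \<noteq> 0 \<and> (\<nexists>\<beta>. \<beta> ^ 2 = c ^ 4 / (mu * c ^ 4 + c ^ 2 + 1))"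
proof -
  define D where "D = mu * c ^ 4 + c ^ 2 + 1"
  have inj: "inj (\<lambda>u::'a. u - 1 / c)"
    by (rule injI) simp
  have surj: "surj (\<lambda>u::'a. u - 1 / c)"
    by (rule surjI[of _ "\<lambda>t. t + 1 / c"]) simp
  have "card {t. t ^ 3 + c * t ^ 2 - t - mu * c = 0}
      = card ((\<lambda>u. u - 1 / c) -` {t. t ^ 3 + c * t ^ 2 - t - mu * c = 0})"
    by (rule card_vimage_inj[symmetric, OF inj]) (simp add: surj)
  also have "\<dots> = card {u. u ^ 3 + c * u ^ 2 - D / c ^ 3 = 0}"
    by (simp only: vimage_Collect_eq shifted_cubic_char3[OF assms] D_def)
  finally have card_shifted: "card {t. t ^ 3 + c * t ^ 2 - t - mu * c = 0}
      = card {u. u ^ 3 + c * u ^ 2 - D / c ^ 3 = 0}" .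
  show ?thesis
  proof (cases "D = 0")
    case True
    have "u ^ 3 + c * u ^ 2 - D / c ^ 3 = u ^ 2 * (u - - c)" for u :: 'a
      using True by (simp add: algebra_simps power2_eq_square power3_eq_cube)
    then have "u ^ 3 + c * u ^ 2 - D / c ^ 3 = 0 \<longleftrightarrow> u \<in> {0, - c}" for u
      by (simp only: mult_eq_0_iff power_eq_0_iff right_minus_eq) simp
    then have "{u. u ^ 3 + c * u ^ 2 - D / c ^ 3 = 0} = {0, - c}"
      by blast
    then show ?thesis
      using card_shifted True assms(2) by (simp add: D_def)
  next
    case False
    note card_shifted
    also have "card {u. u ^ 3 + c * u ^ 2 - D / c ^ 3 = 0}
        = card {s. (- D / c ^ 3) * s ^ 3 + c * s + 1 = 0}"
      using card_roots_reversed_cubic[of "- D / c ^ 3" c] False assms(2) by simp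
    also have "\<dots> = card {s. (- D / c ^ 3) * s ^ 3 + c * s = - 1}"
      by (simp only: eq_neg_iff_add_eq_0)
    finally have "card {t. t ^ 3 + c * t ^ 2 - t - mu * c = 0}
        = card {s. (- D / c ^ 3) * s ^ 3 + c * s = - 1}" .
    moreover have "card {s. (- D / c ^ 3) * s ^ 3 + c * s = - 1} = 1
        \<longleftrightarrow> (\<nexists>\<beta>. \<beta> ^ 2 = - c / (- D / c ^ 3))"
      using False assms by (intro card_additive_cubic_fibre_eq_1_iff_char3) simp_all
    moreover have "- c / (- D / c ^ 3) = c ^ 4 / D"
      by (simp add: power4_eq_xxxx power3_eq_cube)
    ultimately show ?thesis
      using False by (simp add: D_def)
  qed
qed

lemma eta_eq_minus_one_iff: "eta a = -1 \<longleftrightarrow> a \<noteq> 0 \<and> (\<nexists>b. b ^ 2 = a)"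
  by (simp add: eta_def)

theorem lemma8p3:
  fixes mu :: "'a::{field,finite}"
  assumes "card (UNIV::'a set) mod 3 = 0"
    and "mu \<noteq> 0" and "mu \<noteq> 1"
  shows "N1t mu = card {c::'a. c \<noteq> 0 \<and> mu * c ^ 4 + c ^ 2 + 1 \<noteq> 0 \<and>
           eta (c ^ 4 / (mu * c ^ 4 + c ^ 2 + 1)) = -1}"
proof -
  have "of_nat 3 = (0::'a)"
    using assms(1) by (intro prime_dvd_card_imp_of_nat_eq_0) auto
  then have char3: "(3::'a) = 0"
    by simp
  have "c \<noteq> 0 \<and> card {t. t ^ 3 + c * t ^ 2 - t - mu * c = 0} = 1 \<longleftrightarrow>
      c \<noteq> 0 \<and> mu * c ^ 4 + c ^ 2 + 1 \<noteq> 0 \<and> eta (c ^ 4 / (mu * c ^ 4 + c ^ 2 + 1)) = -1" for c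
    using card_roots_eq_1_iff_nonsquare_char3[OF char3, of c mu]
    by (auto simp: eta_eq_minus_one_iff)
  then show ?thesis
    by (simp only: N1t_def)
qed

end
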